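(* For any integers $q\ge 2$ and positive integers $w\le n$, there exists a $\mathrm{TOC}_q(n,2w,w)$ if and only if $\lfloor n/w\rfloor$ divides $(q-1)^w\binom{n}{w}$.
   Context: $\mathcal{H}_q(n,w)$ is the set of all words of length $n$ over $\mathbb{Z}_q$ with exactly $w$ nonzero entries, with the Hamming distance. An $(n,d,w)_q$-code is a nonempty subset of $\mathcal{H}_q(n,w)$ in which any two distinct words have Hamming distance at least $d$; $A_q(n,d,w)$ is the maximum size of such a code and a code of this size is optimal. A $\mathrm{TOC}_q(n,d,w)$ (tiling) is a partition of $\mathcal{H}_q(n,w)$ into mutually disjoint optimal $(n,d,w)_q$-codes. *)

theory Defs
  imports Main
begin

text \<open>Words of length n over Z_q are lists of length n with entries in {0..<q}
  (entry 0 is the zero of Z_q).\<close>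

definition hamming_wt :: "nat list \<Rightarrow> nat" where
  "hamming_wt x = card {i. i < length x \<and> x ! i \<noteq> 0}"

definition hamming_dist :: "nat list \<Rightarrow> nat list \<Rightarrow> nat" where
  "hamming_dist x y = card {i. i < length x \<and> x ! i \<noteq> y ! i}"

definition H :: "nat \<Rightarrow> nat \<Rightarrow> nat \<Rightarrow> nat list set" where
  "H q n w = {x. length x = n \<and> set x \<subseteq> {..<q} \<and> hamming_wt x = w}"

definition is_code :: "nat \<Rightarrow> nat \<Rightarrow> nat \<Rightarrow> nat \<Rightarrow> nat list set \<Rightarrow> bool" where
  "is_code q n d w C \<longleftrightarrow> C \<noteq> {} \<and> C \<subseteq> H q n w \<and>
     (\<forall>x\<in>C. \<forall>y\<in>C. x \<noteq> y \<longrightarrow> hamming_dist x y \<ge> d)"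

definition A_max :: "nat \<Rightarrow> nat \<Rightarrow> nat \<Rightarrow> nat \<Rightarrow> nat" where
  "A_max q n d w = Max {card C | C. is_code q n d w C}"

definition optimal_code :: "nat \<Rightarrow> nat \<Rightarrow> nat \<Rightarrow> nat \<Rightarrow> nat list set \<Rightarrow> bool" where
  "optimal_code q n d w C \<longleftrightarrow> is_code q n d w C \<and> card C = A_max q n d w"

definition is_TOC :: "nat \<Rightarrow> nat \<Rightarrow> nat \<Rightarrow> nat \<Rightarrow> nat list set set \<Rightarrow> bool" where
  "is_TOC q n d w P \<longleftrightarrow> (\<forall>C\<in>P. optimal_code q n d w C) \<and>
     (\<forall>C1\<in>P. \<forall>C2\<in>P. C1 \<noteq> C2 \<longrightarrow> C1 \<inter> C2 = {}) \<and> \<Union>P = H q n w"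

end

(* Two words of weight w are at distance 2w exactly when their supports are disjoint, so an
   optimal (n, 2w, w)_q code consists of floor(n/w) words with pairwise disjoint supports. As
   |H_q(n,w)| = C(n,w) (q-1)^w, a tiling forces floor(n/w) to divide this number.

   Conversely, let m = floor(n/w) divide (q-1)^w C(n,w). By a Baranyai-type argument,
   lam = (q-1)^w copies of all w-subsets of {0..<n} can be arranged into classes of m pairwise
   disjoint blocks: the points are added one at a time, and each step rounds a fractional
   distribution of the new point to an integral one with Hall's theorem. Pairing the lam
   blocks equal to T with the lam words of support T turns every class into an optimal code,
   and the classes tile H_q(n,w). *)

theory Submission
  imports Defs "HOL-Library.FuncSet"
begin

section \<open>Hall's theorem\<close>

definition Hall_condition :: "'i set \<Rightarrow> ('i \<Rightarrow> 'a set) \<Rightarrow> bool" where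
  "Hall_condition I A \<longleftrightarrow> (\<forall>K\<subseteq>I. card K \<le> card (\<Union>(A ` K)))"

definition has_SDR :: "'i set \<Rightarrow> ('i \<Rightarrow> 'a set) \<Rightarrow> bool" where
  "has_SDR I A \<longleftrightarrow> (\<exists>f. inj_on f I \<and> (\<forall>i\<in>I. f i \<in> A i))"

lemma Hall_condition_subset: "Hall_condition I A \<Longrightarrow> J \<subseteq> I \<Longrightarrow> Hall_condition J A"
  unfolding Hall_condition_def by blast

lemma Hall_condition_Diff_tight:
  assumes I: "finite I" "\<forall>i\<in>I. finite (A i)" "Hall_condition I A"
    and K: "K \<subseteq> I" "card (\<Union>(A ` K)) = card K"
  shows "Hall_condition (I - K) (\<lambda>i. A i - \<Union>(A ` K))"
  unfolding Hall_condition_def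
proof (intro allI impI)
  let ?X = "\<Union>(A ` K)"
  fix J assume J: "J \<subseteq> I - K"
  have fin_J: "finite J" using J I(1) by (rule finite_subset[OF _ finite_Diff])
  have fin_K: "finite K" using K(1) I(1) by (rule finite_subset)
  have "card J + card K = card (J \<union> K)"
    using J fin_J fin_K by (simp add: card_Un_disjoint Int_commute disjoint_iff subset_iff)
  also have "\<dots> \<le> card (\<Union>(A ` (J \<union> K)))"
    using I(3) J K(1) unfolding Hall_condition_def by (meson Diff_subset le_sup_iff order_trans)
  also have "\<Union>(A ` (J \<union> K)) = (\<Union>i\<in>J. A i - ?X) \<union> ?X" by blast
  also have "card \<dots> = card (\<Union>i\<in>J. A i - ?X) + card K"
  proof -
    have "finite (\<Union>(A ` J))" "finite ?X" using fin_J fin_K J K(1) I(2) by auto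
    then show ?thesis using K(2) by (subst card_Un_disjoint) auto
  qed
  finally show "card J \<le> card (\<Union>i\<in>J. A i - ?X)" by simp
qed

lemma has_SDR_tight_step:
  fixes I :: "'i set" and A :: "'i \<Rightarrow> 'a set"
  assumes IH: "\<And>(J :: 'i set) (B :: 'i \<Rightarrow> 'a set). card J < card I \<Longrightarrow> finite J \<Longrightarrow>
      \<forall>i\<in>J. finite (B i) \<Longrightarrow> Hall_condition J B \<Longrightarrow> has_SDR J B"
    and I: "finite I" "\<forall>i\<in>I. finite (A i)" "Hall_condition I A"
    and K: "K \<subseteq> I" "K \<noteq> {}" "K \<noteq> I" "card (\<Union>(A ` K)) = card K"
  shows "has_SDR I A"
proof -
  have fin_K: "finite K" using K(1) I(1) by (rule finite_subset)
  have "card K < card I" using K(1,3) I(1) by (simp add: psubset_card_mono)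
  then obtain f1 where f1: "inj_on f1 K" "\<forall>i\<in>K. f1 i \<in> A i"
    using IH[of K A] fin_K I K(1) Hall_condition_subset unfolding has_SDR_def by blast
  define X where "X = \<Union>(A ` K)"
  have "Hall_condition (I - K) (\<lambda>i. A i - X)"
    unfolding X_def using I K(1,4) by (rule Hall_condition_Diff_tight)
  moreover have "card (I - K) < card I"
  proof -
    have "0 < card K" using fin_K K(2) by auto
    then show ?thesis using \<open>card K < card I\<close> by (simp add: card_Diff_subset[OF fin_K K(1)])
  qed
  ultimately obtain f2 where f2: "inj_on f2 (I - K)" "\<forall>i\<in>I - K. f2 i \<in> A i - X"
    using IH[of "I - K" "\<lambda>i. A i - X"] I unfolding has_SDR_def by blast
  have "f1 ` K \<subseteq> X" using f1(2) by (auto simp: X_def)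
  moreover have "f2 ` (I - K) \<inter> X = {}" using f2(2) by blast
  ultimately have "f1 ` K \<inter> f2 ` (I - K) = {}" by blast
  then have "inj_on (\<lambda>i. if i \<in> K then f1 i else f2 i) (K \<union> (I - K))"
    by (rule inj_on_disjoint_Un[OF f1(1) f2(1)])
  then have "inj_on (\<lambda>i. if i \<in> K then f1 i else f2 i) I" using K(1) by (simp add: Un_absorb1)
  moreover have "\<forall>i\<in>I. (if i \<in> K then f1 i else f2 i) \<in> A i" using f1(2) f2(2) by simp
  ultimately show ?thesis unfolding has_SDR_def by blast
qed

lemma has_SDR_slack_step:
  fixes I :: "'i set" and A :: "'i \<Rightarrow> 'a set"
  assumes IH: "\<And>(J :: 'i set) (B :: 'i \<Rightarrow> 'a set). card J < card I \<Longrightarrow> finite J \<Longrightarrow>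
      \<forall>i\<in>J. finite (B i) \<Longrightarrow> Hall_condition J B \<Longrightarrow> has_SDR J B"
    and I: "finite I" "\<forall>i\<in>I. finite (A i)" "Hall_condition I A" "i0 \<in> I"
    and slack: "\<forall>K. K \<subseteq> I \<longrightarrow> K \<noteq> {} \<longrightarrow> K \<noteq> I \<longrightarrow> card K < card (\<Union>(A ` K))"
  shows "has_SDR I A"
proof -
  have "card {i0} \<le> card (\<Union>(A ` {i0}))" using I(3,4) unfolding Hall_condition_def by blast
  then have "A i0 \<noteq> {}" by auto
  then obtain x where x: "x \<in> A i0" by blast
  have "Hall_condition (I - {i0}) (\<lambda>i. A i - {x})"
    unfolding Hall_condition_def
  proof (intro allI impI)
    fix K assume K: "K \<subseteq> I - {i0}"
    show "card K \<le> card (\<Union>i\<in>K. A i - {x})"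
    proof (cases "K = {}")
      case False
      have "finite (\<Union>(A ` K))" using K I(1,2) by (meson Diff_subset finite_UN_I finite_subset subset_iff)
      moreover have "card K < card (\<Union>(A ` K))" using slack K False I(4) by blast
      moreover have "(\<Union>i\<in>K. A i - {x}) = \<Union>(A ` K) - {x}" by blast
      ultimately show ?thesis by (auto simp: card_Diff_singleton_if)
    qed simp
  qed
  moreover have "card (I - {i0}) < card I" using I(1,4) by (rule card_Diff1_less)
  ultimately obtain f where f: "inj_on f (I - {i0})" "\<forall>i\<in>I - {i0}. f i \<in> A i - {x}"
    using IH[of "I - {i0}" "\<lambda>i. A i - {x}"] I(1,2) unfolding has_SDR_def by blast
  define f' where "f' i = (if i = i0 then x else f i)" for i
  have x_new: "x \<notin> f ` (I - {i0})" using f(2) by auto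
  have "inj_on f' I"
  proof (rule inj_onI)
    fix a b assume ab: "a \<in> I" "b \<in> I" "f' a = f' b"
    show "a = b"
    proof (cases "a = i0 \<or> b = i0")
      case True
      then show ?thesis using ab x_new unfolding f'_def by (auto split: if_splits)
    next
      case False
      then show ?thesis using ab inj_onD[OF f(1)] unfolding f'_def by simp
    qed
  qed
  moreover have "\<forall>i\<in>I. f' i \<in> A i" using f x by (simp add: f'_def)
  ultimately show ?thesis unfolding has_SDR_def by blast
qed

theorem Hall_marriage:
  assumes "finite I" "\<forall>i\<in>I. finite (A i)" "Hall_condition I A"
  shows "has_SDR I A"
  using assms
proof (induction "card I" arbitrary: I A rule: less_induct)
  case less
  show ?case
  proof (cases "\<exists>K. K \<subseteq> I \<and> K \<noteq> {} \<and> K \<noteq> I \<and> card (\<Union>(A ` K)) = card K")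
    case True
    then obtain K where "K \<subseteq> I" "K \<noteq> {}" "K \<noteq> I" "card (\<Union>(A ` K)) = card K" by blast
    then show ?thesis using has_SDR_tight_step[of I A K] less by blast
  next
    case False
    show ?thesis
    proof (cases "I = {}")
      case True
      then show ?thesis unfolding has_SDR_def by simp
    next
      case nonempty: False
      have "card K < card (\<Union>(A ` K))" if "K \<subseteq> I" "K \<noteq> {}" "K \<noteq> I" for K
        using False less.prems(3) that unfolding Hall_condition_def by (metis le_neq_implies_less)
      moreover obtain i0 where "i0 \<in> I" using nonempty by blast
      ultimately show ?thesis using has_SDR_slack_step[of I A i0] less by blast
    qed
  qed
qed

lemma Hall_condition_copies:
  fixes c :: "'l \<Rightarrow> nat" and adj :: "'l \<Rightarrow> 'y \<Rightarrow> bool"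
  assumes "finite L" and hall: "\<And>U. U \<subseteq> L \<Longrightarrow> sum c U \<le> card {y\<in>Y. \<exists>l\<in>U. adj l y}"
  shows "Hall_condition (Sigma L (\<lambda>l. {..<c l})) (\<lambda>p. {y\<in>Y. adj (fst p) y})"
  unfolding Hall_condition_def
proof (intro allI impI)
  fix K assume K: "K \<subseteq> Sigma L (\<lambda>l. {..<c l})"
  then have "fst ` K \<subseteq> L" "K \<subseteq> Sigma (fst ` K) (\<lambda>l. {..<c l})" by force+
  moreover have "finite (fst ` K)" using finite_subset[OF \<open>fst ` K \<subseteq> L\<close> assms(1)] .
  ultimately have "card K \<le> card (Sigma (fst ` K) (\<lambda>l. {..<c l}))" by (intro card_mono) auto
  also have "\<dots> = sum c (fst ` K)" using \<open>finite (fst ` K)\<close> by (subst card_SigmaI) auto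
  also have "\<dots> \<le> card {y\<in>Y. \<exists>l\<in>fst ` K. adj l y}" using hall \<open>fst ` K \<subseteq> L\<close> by blast
  also have "{y\<in>Y. \<exists>l\<in>fst ` K. adj l y} = (\<Union>p\<in>K. {y\<in>Y. adj (fst p) y})" by auto
  finally show "card K \<le> card (\<Union>p\<in>K. {y\<in>Y. adj (fst p) y})" .
qed

lemma Hall_capacities:
  fixes c :: "'l \<Rightarrow> nat" and adj :: "'l \<Rightarrow> 'y \<Rightarrow> bool"
  assumes fin: "finite L" "finite Y"
    and hall: "\<And>U. U \<subseteq> L \<Longrightarrow> sum c U \<le> card {y\<in>Y. \<exists>l\<in>U. adj l y}"
    and total: "sum c L = card Y"
  shows "\<exists>g. (\<forall>y\<in>Y. g y \<in> L \<and> adj (g y) y) \<and> (\<forall>l\<in>L. card {y\<in>Y. g y = l} = c l)"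
proof -
  define copies where "copies U = Sigma U (\<lambda>l. {..<c l})" for U
  define A where "A = (\<lambda>p :: 'l \<times> nat. {y\<in>Y. adj (fst p) y})"
  have card_copies: "card (copies U) = sum c U" if "U \<subseteq> L" for U
    unfolding copies_def using that fin(1) finite_subset by (subst card_SigmaI) auto
  have "Hall_condition (copies L) A"
    unfolding copies_def A_def using fin(1) hall by (rule Hall_condition_copies)
  moreover have "finite (copies L)" using fin(1) by (simp add: copies_def)
  ultimately obtain f where f: "inj_on f (copies L)" "\<forall>p\<in>copies L. f p \<in> A p"
    using Hall_marriage[of "copies L" A] fin(2) unfolding has_SDR_def by (auto simp: A_def)
  have "f ` copies L \<subseteq> Y" using f(2) by (auto simp: A_def)
  moreover have "card (f ` copies L) = card Y" using f(1) total card_copies by (simp add: card_image)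
  ultimately have bij: "bij_betw f (copies L) Y"
    using f(1) fin(2) by (simp add: bij_betw_def card_subset_eq)
  define g where "g y = fst (inv_into (copies L) f y)" for y
  have g: "inv_into (copies L) f y \<in> copies L \<and> f (inv_into (copies L) f y) = y" if "y \<in> Y" for y
    using bij that by (auto simp: bij_betw_def inv_into_into f_inv_into_f)
  have "{y\<in>Y. g y = l} = f ` copies {l}" if "l \<in> L" for l
  proof (intro equalityI subsetI)
    fix y assume "y \<in> {y\<in>Y. g y = l}"
    then show "y \<in> f ` copies {l}" using g[of y] by (force simp: g_def copies_def)
  next
    fix y assume "y \<in> f ` copies {l}"
    then obtain p where "p \<in> copies {l}" "y = f p" by blast
    moreover have "copies {l} \<subseteq> copies L" using that by (auto simp: copies_def)
    ultimately show "y \<in> {y\<in>Y. g y = l}"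
      using bij by (auto simp: g_def bij_betw_inv_into_left bij_betwE copies_def)
  qed
  moreover have "inj_on f (copies {l})" if "l \<in> L" for l
    using that by (intro inj_on_subset[OF f(1)]) (auto simp: copies_def)
  ultimately have "card {y\<in>Y. g y = l} = c l" if "l \<in> L" for l
    using that card_copies[of "{l}"] by (simp add: card_image)
  moreover have "g y \<in> L \<and> adj (g y) y" if "y \<in> Y" for y
    using g[OF that] f(2) by (force simp: g_def copies_def A_def)
  ultimately show ?thesis by blast
qed

lemma assignment_from_balanced_weights:
  fixes X :: "'y \<Rightarrow> 'l \<Rightarrow> nat"
  assumes fin: "finite L" "finite Y" and "0 < D"
    and rows: "\<And>y. y \<in> Y \<Longrightarrow> (\<Sum>l\<in>L. X y l) = D"
    and cols: "\<And>l. l \<in> L \<Longrightarrow> (\<Sum>y\<in>Y. X y l) = D * c l"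
  shows "\<exists>g. (\<forall>y\<in>Y. g y \<in> L \<and> 0 < X y (g y)) \<and> (\<forall>l\<in>L. card {y\<in>Y. g y = l} = c l)"
proof (rule Hall_capacities[OF fin])
  fix U assume U: "U \<subseteq> L"
  define N where "N = {y\<in>Y. \<exists>l\<in>U. 0 < X y l}"
  have "D * sum c U = (\<Sum>l\<in>U. \<Sum>y\<in>Y. X y l)"
    using U cols by (simp add: sum_distrib_left subset_iff)
  also have "\<dots> = (\<Sum>y\<in>Y. \<Sum>l\<in>U. X y l)" by (rule sum.swap)
  also have "\<dots> = (\<Sum>y\<in>N. \<Sum>l\<in>U. X y l)"
    using fin(2) by (intro sum.mono_neutral_right) (auto simp: N_def)
  also have "\<dots> \<le> (\<Sum>y\<in>N. D)"
  proof (rule sum_mono)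
    fix y assume "y \<in> N"
    have "(\<Sum>l\<in>U. X y l) \<le> (\<Sum>l\<in>L. X y l)" using U fin(1) by (intro sum_mono2) auto
    then show "(\<Sum>l\<in>U. X y l) \<le> D" using rows \<open>y \<in> N\<close> by (simp add: N_def)
  qed
  finally show "sum c U \<le> card N" using \<open>0 < D\<close> by simp
next
  have "D * sum c L = (\<Sum>l\<in>L. \<Sum>y\<in>Y. X y l)" using cols by (simp add: sum_distrib_left)
  also have "\<dots> = (\<Sum>y\<in>Y. \<Sum>l\<in>L. X y l)" by (rule sum.swap)
  also have "\<dots> = D * card Y" using rows by simp
  finally show "sum c L = card Y" using \<open>0 < D\<close> by simp
qed

lemma bij_betw_matching_fibres:
  assumes "finite A" "finite B" "\<And>y. card {a\<in>A. f a = y} = card {b\<in>B. g b = y}"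
  shows "\<exists>h. bij_betw h A B \<and> (\<forall>a\<in>A. g (h a) = f a)"
proof -
  have "\<forall>y. \<exists>h. bij_betw h {a\<in>A. f a = y} {b\<in>B. g b = y}"
    using assms by (intro allI finite_same_card_bij) auto
  then have "\<exists>h. \<forall>y. bij_betw (h y) {a\<in>A. f a = y} {b\<in>B. g b = y}" by (rule choice)
  then obtain h where h: "\<And>y. bij_betw (h y) {a\<in>A. f a = y} {b\<in>B. g b = y}" by blast
  define h' where "h' a = h (f a) a" for a
  have maps: "h' a \<in> B \<and> g (h' a) = f a" if "a \<in> A" for a
    using bij_betwE[OF h[of "f a"]] that by (auto simp: h'_def)
  have "inj_on h' A"
  proof (rule inj_onI)
    fix a a' assume a: "a \<in> A" "a' \<in> A" "h' a = h' a'"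
    then have "f a = f a'" using maps by metis
    then show "a = a'" using a bij_betw_imp_inj_on[OF h[of "f a"]] by (auto simp: h'_def inj_on_def)
  qed
  moreover have "B \<subseteq> h' ` A"
  proof
    fix b assume "b \<in> B"
    then have "b \<in> h (g b) ` {a\<in>A. f a = g b}" using bij_betw_imp_surj_on[OF h[of "g b"]] by blast
    then obtain a where "a \<in> A" "f a = g b" "b = h (g b) a" by blast
    then show "b \<in> h' ` A" unfolding h'_def by (intro image_eqI[of _ _ a]) auto
  qed
  ultimately show ?thesis using maps by (auto simp: bij_betw_def)
qed

lemma sum_over_fibres:
  fixes f :: "'b \<Rightarrow> nat"
  assumes "finite A" "finite R" "\<And>a. a \<in> A \<Longrightarrow> g a \<notin> R \<Longrightarrow> f (g a) = 0"
  shows "(\<Sum>T\<in>R. card {a\<in>A. g a = T} * f T) = (\<Sum>a\<in>A. f (g a))"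
proof -
  have "(\<Sum>a\<in>A. f (g a)) = (\<Sum>a\<in>{a\<in>A. g a \<in> R}. f (g a))"
    by (rule sum.mono_neutral_right) (use assms in auto)
  also have "\<dots> = (\<Sum>T\<in>R. \<Sum>a\<in>{a. a \<in> {a\<in>A. g a \<in> R} \<and> g a = T}. f (g a))"
    by (rule sum.group[symmetric]) (use assms in auto)
  also have "\<dots> = (\<Sum>T\<in>R. card {a\<in>A. g a = T} * f T)"
  proof (rule sum.cong[OF refl])
    fix T assume "T \<in> R"
    then have "{a. a \<in> {a\<in>A. g a \<in> R} \<and> g a = T} = {a\<in>A. g a = T}" by auto
    moreover have "(\<Sum>a\<in>{a\<in>A. g a = T}. f (g a)) = (\<Sum>a\<in>{a\<in>A. g a = T}. f T)"
      by (rule sum.cong) auto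
    ultimately show "(\<Sum>a\<in>{a. a \<in> {a\<in>A. g a \<in> R} \<and> g a = T}. f (g a)) = card {a\<in>A. g a = T} * f T"
      by simp
  qed
  finally show ?thesis ..
qed

section \<open>A Baranyai-type decomposition\<close>

definition slot_count :: "nat \<Rightarrow> nat \<Rightarrow> (nat \<Rightarrow> nat \<Rightarrow> 'a) \<Rightarrow> 'a \<Rightarrow> nat" where
  "slot_count t m S T = card {(i, s). i < t \<and> s < m \<and> S i s = T}"

lemma slot_count_eq_sum: "slot_count t m S T = (\<Sum>i<t. card {s. s < m \<and> S i s = T})"
proof -
  have "{(i, s). i < t \<and> s < m \<and> S i s = T} = Sigma {..<t} (\<lambda>i. {s. s < m \<and> S i s = T})"
    by auto
  then show ?thesis by (simp add: slot_count_def card_SigmaI)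
qed

lemma slot_count_pos: "i < t \<Longrightarrow> s < m \<Longrightarrow> 0 < slot_count t m S (S i s)"
  unfolding slot_count_eq_sum
  by (rule sum_pos2[of _ i]) (auto simp: card_gt_0_iff)

text \<open>Stage \<open>j\<close> of the construction: \<open>S i s\<close> is the part inside \<open>{..<j}\<close> of block \<open>s\<close> of
  class \<open>i\<close>. Each trace \<open>T\<close> occurs as often as the \<open>k\<close>-sets extending \<open>T\<close> by points \<open>\<ge> j\<close>
  occur among \<open>lam\<close> copies of all \<open>k\<close>-subsets of \<open>{..<n}\<close>, and every class still has room
  for the points its blocks are missing.\<close>
definition baranyai_stage ::
    "nat \<Rightarrow> nat \<Rightarrow> nat \<Rightarrow> nat \<Rightarrow> nat \<Rightarrow> nat \<Rightarrow> (nat \<Rightarrow> nat \<Rightarrow> nat set) \<Rightarrow> bool" where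
  "baranyai_stage n k m t lam j S \<longleftrightarrow>
     (\<forall>i<t. \<forall>s<m. S i s \<subseteq> {..<j}) \<and>
     (\<forall>i<t. \<forall>s<m. \<forall>s'<m. s \<noteq> s' \<longrightarrow> S i s \<inter> S i s' = {}) \<and>
     (\<forall>T\<subseteq>{..<j}. slot_count t m S T =
        (if card T \<le> k then lam * ((n - j) choose (k - card T)) else 0)) \<and>
     (\<forall>i<t. (\<Sum>s<m. k - card (S i s)) \<le> n - j)"

locale baranyai_step =
  fixes n k m t lam j :: nat and S :: "nat \<Rightarrow> nat \<Rightarrow> nat set"
  assumes stage: "baranyai_stage n k m t lam j S" and j_less_n: "j < n"
begin

definition deficiency :: "nat \<Rightarrow> nat" where
  "deficiency i = (\<Sum>s<m. k - card (S i s))"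

lemma S_subset: "i < t \<Longrightarrow> s < m \<Longrightarrow> S i s \<subseteq> {..<j}"
  using stage by (simp add: baranyai_stage_def)

lemma S_disjoint: "i < t \<Longrightarrow> s < m \<Longrightarrow> s' < m \<Longrightarrow> s \<noteq> s' \<Longrightarrow> S i s \<inter> S i s' = {}"
  using stage by (simp add: baranyai_stage_def)

lemma slot_count_S:
  "T \<subseteq> {..<j} \<Longrightarrow>
    slot_count t m S T = (if card T \<le> k then lam * ((n - j) choose (k - card T)) else 0)"
  using stage by (simp add: baranyai_stage_def)

lemma deficiency_le: "i < t \<Longrightarrow> deficiency i \<le> n - j"
  using stage by (simp add: baranyai_stage_def deficiency_def)

definition open_traces :: "nat set set" where
  "open_traces = {T. T \<subseteq> {..<j} \<and> card T < k}"

text \<open>The number of blocks with trace \<open>T\<close> that must receive \<open>j\<close>.\<close>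
definition demand :: "nat set \<Rightarrow> nat" where
  "demand T = lam * ((n - Suc j) choose (k - card T - 1))"

text \<open>Putting \<open>j\<close> into a given block with trace \<open>T\<close> of class \<open>i\<close> with probability
  \<open>(k - card T) / (n - j)\<close>, and into no block of class \<open>i\<close> with the remaining probability,
  meets every count of the next stage in expectation; the weights are \<open>n - j\<close> times these
  probabilities.\<close>
definition weight :: "nat \<Rightarrow> nat set option \<Rightarrow> nat" where
  "weight i l = (case l of
      None \<Rightarrow> n - j - deficiency i
    | Some T \<Rightarrow> card {s. s < m \<and> S i s = T} * (k - card T))"

lemma finite_open_traces: "finite open_traces"
  by (rule finite_subset[of _ "Pow {..<j}"]) (auto simp: open_traces_def)

lemma weight_Some_row_sum:
  assumes "i < t"
  shows "(\<Sum>T\<in>open_traces. weight i (Some T)) = deficiency i"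
  using sum_over_fibres[of "{..<m}" open_traces "S i" "\<lambda>T. k - card T"]
    finite_open_traces S_subset[OF assms]
  by (auto simp: weight_def deficiency_def open_traces_def)

lemma weight_row_sum:
  assumes "i < t"
  shows "(\<Sum>l\<in>insert None (Some ` open_traces). weight i l) = n - j"
  using weight_Some_row_sum[OF assms] deficiency_le[OF assms] finite_open_traces
  by (simp add: sum.reindex weight_def)

lemma weight_col_sum_Some:
  assumes "T \<in> open_traces"
  shows "(\<Sum>i<t. weight i (Some T)) = (n - j) * demand T"
proof -
  have "(\<Sum>i<t. weight i (Some T)) = slot_count t m S T * (k - card T)"
    by (simp add: weight_def slot_count_eq_sum sum_distrib_right)
  also have "\<dots> = lam * ((k - card T) * ((n - j) choose (k - card T)))"
    using assms slot_count_S by (simp add: open_traces_def)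
  also have "(k - card T) * ((n - j) choose (k - card T)) = (n - j) * ((n - Suc j) choose (k - card T - 1))"
    using assms by (subst times_binomial_minus1_eq) (auto simp: open_traces_def)
  finally show ?thesis by (simp add: demand_def)
qed

lemma weight_col_sum_None:
  shows "(\<Sum>i<t. weight i None) = (n - j) * (t - (\<Sum>T\<in>open_traces. demand T))"
proof -
  have "(n - j) * (\<Sum>T\<in>open_traces. demand T) = (\<Sum>T\<in>open_traces. \<Sum>i<t. weight i (Some T))"
    using weight_col_sum_Some by (simp add: sum_distrib_left)
  also have "\<dots> = (\<Sum>i<t. \<Sum>T\<in>open_traces. weight i (Some T))" by (rule sum.swap)
  also have "\<dots> = (\<Sum>i<t. deficiency i)" using weight_Some_row_sum by simp
  finally have demand_sum: "(n - j) * (\<Sum>T\<in>open_traces. demand T) = (\<Sum>i<t. deficiency i)" .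
  have "(\<Sum>i<t. weight i None) + (\<Sum>i<t. deficiency i) = (\<Sum>i<t. n - j)"
    unfolding sum.distrib[symmetric]
  proof (rule sum.cong[OF refl])
    fix i assume "i \<in> {..<t}"
    then show "weight i None + deficiency i = n - j" using deficiency_le[of i] by (simp add: weight_def)
  qed
  then have "(\<Sum>i<t. weight i None) = t * (n - j) - (n - j) * (\<Sum>T\<in>open_traces. demand T)"
    unfolding demand_sum by simp
  also have "\<dots> = (n - j) * (t - (\<Sum>T\<in>open_traces. demand T))"
    by (simp add: diff_mult_distrib2 mult.commute)
  finally show ?thesis .
qed

lemma row_labelling:
  shows "\<exists>g. (\<forall>i\<in>{..<t}. g i \<in> insert None (Some ` open_traces) \<and> 0 < weight i (g i)) \<and>
    (\<forall>T\<in>open_traces. card {i\<in>{..<t}. g i = Some T} = demand T)"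
proof -
  let ?L = "insert None (Some ` open_traces)"
  define c where "c l = (case l of None \<Rightarrow> t - (\<Sum>T\<in>open_traces. demand T) | Some T \<Rightarrow> demand T)"
    for l
  have "\<forall>l\<in>?L. (\<Sum>i<t. weight i l) = (n - j) * c l"
    using weight_col_sum_None weight_col_sum_Some by (auto simp: c_def)
  then have "\<exists>g. (\<forall>i\<in>{..<t}. g i \<in> ?L \<and> 0 < weight i (g i)) \<and>
      (\<forall>l\<in>?L. card {i\<in>{..<t}. g i = l} = c l)"
    using assignment_from_balanced_weights[of ?L "{..<t}" "n - j" weight c]
      finite_open_traces weight_row_sum j_less_n by auto
  then show ?thesis by (auto simp: c_def)
qed

lemma slot_choice:
  shows "\<exists>\<sigma>. (\<forall>i<t. \<sigma> i = None \<longrightarrow> deficiency i < n - j) \<and>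
       (\<forall>i<t. \<forall>s. \<sigma> i = Some s \<longrightarrow> s < m \<and> card (S i s) < k) \<and>
       (\<forall>T\<in>open_traces. card {(i, s). i < t \<and> \<sigma> i = Some s \<and> S i s = T} = demand T)"
proof -
  obtain g where g: "\<forall>i\<in>{..<t}. g i \<in> insert None (Some ` open_traces) \<and> 0 < weight i (g i)"
    and g_count: "\<forall>T\<in>open_traces. card {i\<in>{..<t}. g i = Some T} = demand T"
    using row_labelling by blast
  \<comment> \<open>several blocks of a class may have the same (empty) trace, hence the choice\<close>
  define \<sigma> where "\<sigma> i = map_option (\<lambda>T. SOME s. s < m \<and> S i s = T) (g i)" for i
  have marked: "s < m \<and> card (S i s) < k \<and> g i = Some (S i s)"
    if i: "i < t" and \<sigma>i: "\<sigma> i = Some s" for i s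
  proof -
    obtain T where T: "g i = Some T" "s = (SOME s. s < m \<and> S i s = T)"
      using \<sigma>i by (auto simp: \<sigma>_def)
    have "0 < weight i (g i)" using g i by blast
    then have "0 < card {s. s < m \<and> S i s = T} * (k - card T)" using T(1) by (simp add: weight_def)
    then have ex: "\<exists>s. s < m \<and> S i s = T" and "card T < k" by (auto simp: card_gt_0_iff)
    have "s < m \<and> S i s = T" unfolding T(2) using ex by (rule someI_ex)
    then show ?thesis using T(1) \<open>card T < k\<close> by simp
  qed
  have count: "card {(i, s). i < t \<and> \<sigma> i = Some s \<and> S i s = T} = demand T"
    if "T \<in> open_traces" for T
  proof -
    let ?M = "{(i, s). i < t \<and> \<sigma> i = Some s \<and> S i s = T}"
    have inj: "inj_on fst ?M" by (auto simp: inj_on_def)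
    have "fst ` ?M = {i\<in>{..<t}. g i = Some T}"
    proof (intro equalityI subsetI)
      fix i assume i: "i \<in> {i\<in>{..<t}. g i = Some T}"
      then obtain s where s: "\<sigma> i = Some s" by (auto simp: \<sigma>_def)
      then have "S i s = T" using marked[of i s] i by auto
      then show "i \<in> fst ` ?M" using i s by (intro image_eqI[of _ _ "(i, s)"]) auto
    next
      fix i assume "i \<in> fst ` ?M"
      then obtain s where "i < t" "\<sigma> i = Some s" "S i s = T" by auto
      then show "i \<in> {i\<in>{..<t}. g i = Some T}" using marked[of i s] by auto
    qed
    then have "card ?M = card {i\<in>{..<t}. g i = Some T}" using card_image[OF inj] by simp
    then show ?thesis using g_count that by simp
  qed
  have unmarked: "deficiency i < n - j" if i: "i < t" and none: "\<sigma> i = None" for i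
  proof -
    have "0 < weight i (g i)" using g i by blast
    moreover have "g i = None" using none by (simp add: \<sigma>_def)
    ultimately show ?thesis by (simp add: weight_def)
  qed
  have "(\<forall>i<t. \<sigma> i = None \<longrightarrow> deficiency i < n - j) \<and>
      (\<forall>i<t. \<forall>s. \<sigma> i = Some s \<longrightarrow> s < m \<and> card (S i s) < k) \<and>
      (\<forall>T\<in>open_traces. card {(i, s). i < t \<and> \<sigma> i = Some s \<and> S i s = T} = demand T)"
    using marked count unmarked by simp
  then show ?thesis by (rule exI[of _ \<sigma>])
qed

end

locale baranyai_update = baranyai_step +
  fixes \<sigma> :: "nat \<Rightarrow> nat option"
  assumes unmarked_deficiency: "i < t \<Longrightarrow> \<sigma> i = None \<Longrightarrow> deficiency i < n - j"
    and marked_slot: "i < t \<Longrightarrow> \<sigma> i = Some s \<Longrightarrow> s < m \<and> card (S i s) < k"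
    and marked_count:
      "T \<in> open_traces \<Longrightarrow> card {(i, s). i < t \<and> \<sigma> i = Some s \<and> S i s = T} = demand T"
begin

definition S_next :: "nat \<Rightarrow> nat \<Rightarrow> nat set" where
  "S_next i s = (if \<sigma> i = Some s then insert j (S i s) else S i s)"

lemma j_notin_S:
  assumes "i < t" "s < m"
  shows "j \<notin> S i s"
  using S_subset[OF assms] by auto

lemma marked_count_all:
  assumes "T \<subseteq> {..<j}"
  shows "card {(i, s). i < t \<and> \<sigma> i = Some s \<and> S i s = T} = (if card T < k then demand T else 0)"
proof (cases "card T < k")
  case False
  then have "{(i, s). i < t \<and> \<sigma> i = Some s \<and> S i s = T} = {}" using marked_slot by fastforce
  then show ?thesis using False by (metis card.empty)
qed (use assms marked_count in \<open>auto simp: open_traces_def\<close>)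

lemma slot_count_next_insert:
  assumes "T \<subseteq> {..<j}"
  shows "slot_count t m S_next (insert j T) = (if card T < k then demand T else 0)"
proof -
  have "{(i, s). i < t \<and> s < m \<and> S_next i s = insert j T} =
      {(i, s). i < t \<and> \<sigma> i = Some s \<and> S i s = T}"
  proof -
    have "i < t \<and> s < m \<and> S_next i s = insert j T \<longleftrightarrow> i < t \<and> \<sigma> i = Some s \<and> S i s = T"
      for i s
    proof
      assume i: "i < t \<and> s < m \<and> S_next i s = insert j T"
      then have "j \<notin> S i s" "j \<notin> T" using j_notin_S assms by auto
      moreover have "\<sigma> i = Some s" "insert j (S i s) = insert j T"
        using i \<open>j \<notin> S i s\<close> by (auto simp: S_next_def split: if_splits)
      ultimately show "i < t \<and> \<sigma> i = Some s \<and> S i s = T" using i by (simp add: insert_ident)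
    next
      assume "i < t \<and> \<sigma> i = Some s \<and> S i s = T"
      then show "i < t \<and> s < m \<and> S_next i s = insert j T"
        using marked_slot[of i s] by (simp add: S_next_def)
    qed
    then show ?thesis by blast
  qed
  then show ?thesis using marked_count_all[OF assms] by (simp add: slot_count_def)
qed

lemma slot_count_next_old:
  assumes "T \<subseteq> {..<j}"
  shows "slot_count t m S_next T =
    slot_count t m S T - card {(i, s). i < t \<and> \<sigma> i = Some s \<and> S i s = T}"
proof -
  let ?O = "{(i, s). i < t \<and> s < m \<and> S i s = T}"
  let ?M = "{(i, s). i < t \<and> \<sigma> i = Some s \<and> S i s = T}"
  have "S_next i s = T \<longleftrightarrow> S i s = T \<and> \<sigma> i \<noteq> Some s" for i s
  proof (cases "\<sigma> i = Some s")
    case True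
    have "j \<notin> T" using assms by auto
    then show ?thesis using True by (auto simp: S_next_def)
  qed (simp add: S_next_def)
  then have "{(i, s). i < t \<and> s < m \<and> S_next i s = T} = ?O - ?M" by auto
  moreover have "?M \<subseteq> ?O"
  proof (rule subrelI)
    fix i s assume "(i, s) \<in> ?M"
    then show "(i, s) \<in> ?O" using marked_slot[of i s] by simp
  qed
  moreover have "finite ?O" by (rule finite_subset[of _ "{..<t} \<times> {..<m}"]) auto
  ultimately show ?thesis by (simp add: slot_count_def card_Diff_subset finite_subset[of ?M ?O])
qed

lemma slot_count_next:
  assumes "T \<subseteq> {..<Suc j}"
  shows "slot_count t m S_next T =
    (if card T \<le> k then lam * ((n - Suc j) choose (k - card T)) else 0)"
proof (cases "j \<in> T")
  case True
  define T0 where "T0 = T - {j}"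
  have T: "T = insert j T0" "j \<notin> T0" "T0 \<subseteq> {..<j}"
    using assms True by (auto simp: T0_def less_Suc_eq)
  have "finite T0" using T(3) by (rule finite_subset) simp
  then show ?thesis using slot_count_next_insert[OF T(3)] T(1,2) by (simp add: demand_def)
next
  case False
  then have T: "T \<subseteq> {..<j}" using assms by (auto simp: less_Suc_eq)
  note counts = slot_count_next_old[OF T] marked_count_all[OF T] slot_count_S[OF T]
  consider "card T < k" | "card T = k" | "k < card T" by linarith
  then show ?thesis
  proof cases
    case 1
    have "(n - j) choose (k - card T) =
        ((n - Suc j) choose (k - card T - 1)) + ((n - Suc j) choose (k - card T))"
      using 1 j_less_n by (subst choose_reduce_nat) auto
    then show ?thesis using 1 counts by (simp add: demand_def add_mult_distrib2)
  qed (use counts in simp_all)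
qed

lemma deficiency_next:
  assumes "i < t"
  shows "(\<Sum>s<m. k - card (S_next i s)) \<le> n - Suc j"
proof (cases "\<sigma> i")
  case None
  then show ?thesis using unmarked_deficiency[OF assms] by (simp add: S_next_def deficiency_def)
next
  case (Some s0)
  have s0: "s0 < m" "card (S i s0) < k" using marked_slot[OF assms Some] by auto
  have "finite (S i s0)" using S_subset[OF assms s0(1)] by (rule finite_subset) simp
  then have "k - card (S_next i s0) + 1 = k - card (S i s0)"
    using s0 Some j_notin_S[OF assms s0(1)] by (simp add: S_next_def)
  moreover have "(\<Sum>s<m. k - card (S_next i s)) =
      (k - card (S_next i s0)) + (\<Sum>s\<in>{..<m} - {s0}. k - card (S_next i s))"
    using s0 by (intro sum.remove) auto
  moreover have "(\<Sum>s\<in>{..<m} - {s0}. k - card (S_next i s)) = (\<Sum>s\<in>{..<m} - {s0}. k - card (S i s))"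
    using Some by (intro sum.cong) (auto simp: S_next_def)
  moreover have "deficiency i = (k - card (S i s0)) + (\<Sum>s\<in>{..<m} - {s0}. k - card (S i s))"
    unfolding deficiency_def using s0 by (intro sum.remove) auto
  ultimately show ?thesis using deficiency_le[OF assms] by linarith
qed

lemma stage_next: "baranyai_stage n k m t lam (Suc j) S_next"
  unfolding baranyai_stage_def
proof (intro conjI allI impI)
  show "S_next i s \<subseteq> {..<Suc j}" if "i < t" "s < m" for i s
    using S_subset[OF that] by (auto simp: S_next_def)
  show "S_next i s \<inter> S_next i s' = {}" if "i < t" "s < m" "s' < m" "s \<noteq> s'" for i s s'
    using S_disjoint[OF that] j_notin_S that by (auto simp: S_next_def)
qed (use slot_count_next deficiency_next in auto)

end

lemma baranyai_stage_Suc: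
  assumes "baranyai_stage n k m t lam j S" "j < n"
  shows "\<exists>S'. baranyai_stage n k m t lam (Suc j) S'"
proof -
  interpret baranyai_step n k m t lam j S using assms by unfold_locales
  obtain \<sigma> where "\<forall>i<t. \<sigma> i = None \<longrightarrow> deficiency i < n - j"
      "\<forall>i<t. \<forall>s. \<sigma> i = Some s \<longrightarrow> s < m \<and> card (S i s) < k"
      "\<forall>T\<in>open_traces. card {(i, s). i < t \<and> \<sigma> i = Some s \<and> S i s = T} = demand T"
    using slot_choice by blast
  then interpret baranyai_update n k m t lam j S \<sigma> by unfold_locales auto
  show ?thesis using stage_next by blast
qed

lemma baranyai_stage_0:
  assumes "k * m \<le> n" "t * m = lam * (n choose k)"
  shows "baranyai_stage n k m t lam 0 (\<lambda>i s. {})"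
proof -
  have "slot_count t m (\<lambda>i s. {}) {} = t * m" by (simp add: slot_count_eq_sum)
  then show ?thesis using assms by (simp add: baranyai_stage_def mult.commute)
qed

theorem baranyai_decomposition:
  assumes "k * m \<le> n" "t * m = lam * (n choose k)"
  obtains S where "\<And>i s. i < t \<Longrightarrow> s < m \<Longrightarrow> S i s \<subseteq> {..<n} \<and> card (S i s) = k"
    "\<And>i s s'. i < t \<Longrightarrow> s < m \<Longrightarrow> s' < m \<Longrightarrow> s \<noteq> s' \<Longrightarrow> S i s \<inter> S i s' = {}"
    "\<And>T. T \<subseteq> {..<n} \<Longrightarrow> card T = k \<Longrightarrow> slot_count t m S T = lam"
proof -
  have "\<exists>S. baranyai_stage n k m t lam j S" if "j \<le> n" for j
    using that
  proof (induction j)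
    case 0
    show ?case using baranyai_stage_0[OF assms] by blast
  next
    case (Suc j)
    then show ?case using baranyai_stage_Suc by (metis Suc_le_lessD less_imp_le_nat)
  qed
  then obtain S where S: "baranyai_stage n k m t lam n S" by blast
  show ?thesis
  proof (rule that)
    fix i s assume slot: "i < t" "s < m"
    have sub: "S i s \<subseteq> {..<n}" using S slot by (simp add: baranyai_stage_def)
    have count: "\<And>T. T \<subseteq> {..<n} \<Longrightarrow>
        slot_count t m S T = (if card T \<le> k then lam * (0 choose (k - card T)) else 0)"
      using S by (simp add: baranyai_stage_def)
    have "0 < (if card (S i s) \<le> k then lam * (0 choose (k - card (S i s))) else 0)"
      using slot_count_pos[OF slot, of S] unfolding count[OF sub] .
    then have "card (S i s) = k" by (cases "k - card (S i s)") (auto split: if_splits)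
    with sub show "S i s \<subseteq> {..<n} \<and> card (S i s) = k" ..
  qed (use S in \<open>simp_all add: baranyai_stage_def\<close>)
qed

section \<open>Constant-weight codes of minimum distance \<open>2 w\<close>\<close>

definition word_support :: "nat list \<Rightarrow> nat set" where
  "word_support x = {i. i < length x \<and> x ! i \<noteq> 0}"

lemma finite_word_support [simp]: "finite (word_support x)"
  by (simp add: word_support_def)

lemma mem_H_iff: "x \<in> H q n w \<longleftrightarrow> length x = n \<and> set x \<subseteq> {..<q} \<and> card (word_support x) = w"
  by (simp add: H_def hamming_wt_def word_support_def)

lemma word_support_H: "x \<in> H q n w \<Longrightarrow> word_support x \<subseteq> {..<n}"
  by (auto simp: mem_H_iff word_support_def)

lemma finite_H: "finite (H q n w)"
  by (rule finite_subset[of _ "{xs. set xs \<subseteq> {..<q} \<and> length xs = n}"])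
     (auto simp: H_def intro: finite_lists_length_eq)

lemma hamming_dist_le_card_Un:
  "length x = length y \<Longrightarrow> hamming_dist x y \<le> card (word_support x \<union> word_support y)"
  unfolding hamming_dist_def by (rule card_mono) (auto simp: word_support_def)

lemma hamming_dist_disjoint_supports:
  assumes "length x = length y" "word_support x \<inter> word_support y = {}"
  shows "hamming_dist x y = card (word_support x) + card (word_support y)"
proof -
  have "x ! i \<noteq> y ! i \<longleftrightarrow> x ! i \<noteq> 0 \<or> y ! i \<noteq> 0" if "i < length x" for i
  proof -
    have "i \<notin> word_support x \<inter> word_support y" using assms(2) by simp
    then have "\<not> (x ! i \<noteq> 0 \<and> y ! i \<noteq> 0)" using assms(1) that by (simp add: word_support_def)
    then show ?thesis by auto
  qed
  then have "{i. i < length x \<and> x ! i \<noteq> y ! i} = word_support x \<union> word_support y"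
    using assms(1) by (auto simp: word_support_def)
  then show ?thesis using assms(2) by (simp add: hamming_dist_def card_Un_disjoint)
qed

lemma double_weight_le_hamming_dist_iff:
  assumes "x \<in> H q n w" "y \<in> H q n w"
  shows "2 * w \<le> hamming_dist x y \<longleftrightarrow> word_support x \<inter> word_support y = {}"
proof
  assume far: "2 * w \<le> hamming_dist x y"
  have "card (word_support x \<union> word_support y) + card (word_support x \<inter> word_support y) = w + w"
    using card_Un_Int[of "word_support x" "word_support y"] assms by (simp add: mem_H_iff)
  moreover have "hamming_dist x y \<le> card (word_support x \<union> word_support y)"
    using hamming_dist_le_card_Un[of x y] assms by (simp add: mem_H_iff)
  ultimately have "card (word_support x \<inter> word_support y) = 0" using far by linarith
  then show "word_support x \<inter> word_support y = {}" by simp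
qed (use assms hamming_dist_disjoint_supports in \<open>auto simp: mem_H_iff\<close>)

lemma is_code_double_weight_iff:
  "is_code q n (2 * w) w C \<longleftrightarrow>
     C \<noteq> {} \<and> C \<subseteq> H q n w \<and> (\<forall>x\<in>C. \<forall>y\<in>C. x \<noteq> y \<longrightarrow> word_support x \<inter> word_support y = {})"
proof (cases "C \<subseteq> H q n w")
  case True
  then have "2 * w \<le> hamming_dist x y \<longleftrightarrow> word_support x \<inter> word_support y = {}"
    if "x \<in> C" "y \<in> C" for x y
    using double_weight_le_hamming_dist_iff[of x q n w y] that by auto
  then show ?thesis using True unfolding is_code_def by auto
qed (auto simp: is_code_def)

lemma card_code_le:
  assumes "0 < w" "is_code q n (2 * w) w C"
  shows "card C \<le> n div w"
proof -
  have C: "C \<subseteq> H q n w" "\<forall>x\<in>C. \<forall>y\<in>C. x \<noteq> y \<longrightarrow> word_support x \<inter> word_support y = {}"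
    using assms(2) by (auto simp: is_code_double_weight_iff)
  have "finite C" using C(1) by (rule finite_subset[OF _ finite_H])
  have "card C * w = (\<Sum>x\<in>C. card (word_support x))" using C(1) by (simp add: mem_H_iff subset_iff)
  also have "\<dots> = card (\<Union>(word_support ` C))"
    using \<open>finite C\<close> C(2) by (intro card_UN_disjoint[symmetric]) auto
  also have "\<dots> \<le> card {..<n}"
    by (intro card_mono UN_least word_support_H) (use C(1) in auto)
  finally show ?thesis using assms(1) by (simp add: less_eq_div_iff_mult_less_eq)
qed

definition block_word :: "nat \<Rightarrow> nat \<Rightarrow> nat \<Rightarrow> nat list" where
  "block_word n w i = map (\<lambda>p. if p div w = i then 1 else 0) [0..<n]"

lemma word_support_block_word: "word_support (block_word n w i) = {p. p < n \<and> p div w = i}"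
  by (auto simp: block_word_def word_support_def split: if_splits)

lemma mult_Suc_le_if_less_div:
  assumes "0 < w" "i < n div w"
  shows "w * Suc i \<le> n"
  using assms less_eq_div_iff_mult_less_eq[of w "Suc i" n] by (simp add: mult.commute)

lemma card_word_support_block_word:
  assumes "0 < w" "i < n div w"
  shows "card (word_support (block_word n w i)) = w"
proof -
  have "{p. p < n \<and> p div w = i} = {w * i..<w * i + w}"
  proof (intro equalityI subsetI)
    fix p assume "p \<in> {p. p < n \<and> p div w = i}"
    moreover have "p < w * (p div w) + w"
      using dividend_less_div_times[OF assms(1), of p] by (simp add: algebra_simps)
    ultimately show "p \<in> {w * i..<w * i + w}" by auto
  next
    fix p assume "p \<in> {w * i..<w * i + w}"
    then show "p \<in> {p. p < n \<and> p div w = i}"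
      using mult_Suc_le_if_less_div[OF assms] by (auto intro: div_nat_eqI)
  qed
  then show ?thesis by (simp add: word_support_block_word)
qed

lemma exists_code_of_card_n_div_w:
  assumes "2 \<le> q" "0 < w" "w \<le> n"
  shows "\<exists>C. is_code q n (2 * w) w C \<and> card C = n div w"
proof -
  let ?C = "block_word n w ` {..<n div w}"
  have "block_word n w i \<in> H q n w" if "i < n div w" for i
    using assms card_word_support_block_word[OF assms(2) that]
    by (auto simp: mem_H_iff block_word_def)
  moreover have "inj_on (block_word n w) {..<n div w}"
  proof (rule inj_onI)
    fix i i' assume i: "i \<in> {..<n div w}" and eq: "block_word n w i = block_word n w i'"
    have "w * i < n" using mult_Suc_le_if_less_div[OF assms(2), of i n] i assms(2) by simp
    then have "w * i \<in> word_support (block_word n w i')"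
      using assms(2) by (simp add: eq[symmetric] word_support_block_word)
    then show "i = i'" using assms(2) by (simp add: word_support_block_word)
  qed
  moreover have "0 < n div w" using assms by (simp add: div_greater_zero_iff)
  ultimately show ?thesis
    by (intro exI[of _ ?C]) (auto simp: is_code_double_weight_iff card_image word_support_block_word)
qed

lemma A_max_double_weight:
  assumes "2 \<le> q" "0 < w" "w \<le> n"
  shows "A_max q n (2 * w) w = n div w"
  unfolding A_max_def
proof (rule Max_eqI)
  show "finite {card C |C. is_code q n (2 * w) w C}"
    by (rule finite_subset[of _ "{..n div w}"]) (use card_code_le assms in auto)
  show "y \<le> n div w" if "y \<in> {card C |C. is_code q n (2 * w) w C}" for y
    using that card_code_le assms(2) by auto
  obtain C where "is_code q n (2 * w) w C" "card C = n div w"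
    using exists_code_of_card_n_div_w[OF assms] by blast
  then show "n div w \<in> {card C |C. is_code q n (2 * w) w C}" by (auto intro!: exI[of _ C])
qed

lemma optimal_code_double_weight_iff:
  assumes "2 \<le> q" "0 < w" "w \<le> n"
  shows "optimal_code q n (2 * w) w C \<longleftrightarrow> is_code q n (2 * w) w C \<and> card C = n div w"
  using A_max_double_weight[OF assms] by (simp add: optimal_code_def)

lemma words_with_support_eq_image:
  assumes "0 < q" "T \<subseteq> {..<n}"
  shows "{x. length x = n \<and> set x \<subseteq> {..<q} \<and> word_support x = T} =
    (\<lambda>f. map f [0..<n]) ` PiE {..<n} (\<lambda>p. if p \<in> T then {1..<q} else {0})"
    (is "_ = _ ` ?F")
proof (intro equalityI subsetI)
  fix x assume x: "x \<in> {x. length x = n \<and> set x \<subseteq> {..<q} \<and> word_support x = T}"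
  then have "restrict (nth x) {..<n} \<in> ?F"
    by (auto simp: word_support_def subset_iff set_conv_nth)
  moreover have "map (restrict (nth x) {..<n}) [0..<n] = x"
    using x by (intro nth_equalityI) auto
  ultimately show "x \<in> (\<lambda>f. map f [0..<n]) ` ?F" by (metis image_eqI)
next
  fix x assume "x \<in> (\<lambda>f. map f [0..<n]) ` ?F"
  then obtain f where f: "f \<in> ?F" and x: "x = map f [0..<n]" by blast
  have val: "f p \<in> (if p \<in> T then {1..<q} else {0})" if "p < n" for p
    using f that by (simp add: PiE_iff)
  have "set x \<subseteq> {..<q}"
  proof
    fix v assume "v \<in> set x"
    then obtain p where "p < n" "v = f p" by (auto simp: x)
    then show "v \<in> {..<q}" using val[of p] assms(1) by (auto split: if_splits)
  qed
  moreover have "word_support x = T"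
  proof (intro set_eqI iffI)
    fix p assume "p \<in> word_support x"
    then have "p < n" "f p \<noteq> 0" by (auto simp: x word_support_def)
    then show "p \<in> T" using val[of p] by (auto split: if_splits)
  next
    fix p assume "p \<in> T"
    then have "p < n" using assms(2) by auto
    then show "p \<in> word_support x" using val[of p] \<open>p \<in> T\<close> by (auto simp: x word_support_def)
  qed
  ultimately show "x \<in> {x. length x = n \<and> set x \<subseteq> {..<q} \<and> word_support x = T}"
    by (simp add: x)
qed

lemma card_words_with_support:
  assumes "0 < q" "T \<subseteq> {..<n}"
  shows "card {x. length x = n \<and> set x \<subseteq> {..<q} \<and> word_support x = T} = (q - 1) ^ card T"
proof -
  define F where "F = PiE {..<n} (\<lambda>p. if p \<in> T then {1..<q} else {0})"
  note image = words_with_support_eq_image[OF assms, folded F_def]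
  moreover have "inj_on (\<lambda>f. map f [0..<n]) F"
    by (rule inj_onI, rule PiE_ext[of _ "{..<n}"]) (auto simp: F_def map_eq_conv)
  moreover have "card F = (\<Prod>p\<in>T. q - 1)"
    using assms(2) by (simp add: F_def card_PiE if_distrib prod.If_cases Int_absorb1 Diff_eq)
  ultimately show ?thesis unfolding image by (simp add: card_image)
qed

lemma card_H_fibre:
  assumes "0 < q"
  shows "card {x\<in>H q n w. word_support x = T} = (if T \<subseteq> {..<n} \<and> card T = w then (q - 1) ^ w else 0)"
proof (cases "T \<subseteq> {..<n} \<and> card T = w")
  case True
  then have "{x\<in>H q n w. word_support x = T} = {x. length x = n \<and> set x \<subseteq> {..<q} \<and> word_support x = T}"
    by (auto simp: mem_H_iff)
  then show ?thesis using True card_words_with_support[OF assms] by simp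
next
  case False
  then have empty: "{x\<in>H q n w. word_support x = T} = {}"
    using word_support_H by (auto simp: mem_H_iff)
  show ?thesis unfolding empty if_not_P[OF False] by simp
qed

lemma card_H:
  assumes "0 < q"
  shows "card (H q n w) = (n choose w) * (q - 1) ^ w"
proof -
  let ?R = "{T. T \<subseteq> {..<n} \<and> card T = w}"
  have "finite ?R" by (rule finite_subset[of _ "Pow {..<n}"]) auto
  have "word_support x \<in> ?R" if "x \<in> H q n w" for x
    using word_support_H[OF that] that by (simp add: mem_H_iff)
  then have "(\<Sum>T\<in>?R. card {x\<in>H q n w. word_support x = T} * 1) = (\<Sum>x\<in>H q n w. 1)"
    using \<open>finite ?R\<close> by (intro sum_over_fibres finite_H) auto
  then have "card (H q n w) = (\<Sum>T\<in>?R. card {x\<in>H q n w. word_support x = T} * 1)" by simp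
  also have "\<dots> = card ?R * (q - 1) ^ w" using card_H_fibre[OF assms] by simp
  finally show ?thesis by (simp add: n_subsets)
qed

section \<open>Tilings\<close>

lemma is_TOC_of_class_bijection:
  assumes q: "2 \<le> q" and w: "0 < w" "w \<le> n"
    and h: "bij_betw h ({..<t} \<times> {..<n div w}) (H q n w)"
    and disj: "\<And>i s s'. i < t \<Longrightarrow> s < n div w \<Longrightarrow> s' < n div w \<Longrightarrow> s \<noteq> s' \<Longrightarrow>
      word_support (h (i, s)) \<inter> word_support (h (i, s')) = {}"
  shows "is_TOC q n (2 * w) w ((\<lambda>i. h ` ({i} \<times> {..<n div w})) ` {..<t})"
proof -
  define code where "code = (\<lambda>i. h ` ({i} \<times> {..<n div w}))"
  have inj: "inj_on h ({..<t} \<times> {..<n div w})" using h by (rule bij_betw_imp_inj_on)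
  have "optimal_code q n (2 * w) w (code i)" if i: "i < t" for i
  proof -
    have "0 < n div w" using w by (simp add: div_greater_zero_iff)
    then have "code i \<noteq> {}" by (auto simp: code_def)
    moreover have "code i \<subseteq> H q n w" using bij_betwE[OF h] i by (auto simp: code_def)
    moreover have "\<forall>x\<in>code i. \<forall>y\<in>code i. x \<noteq> y \<longrightarrow> word_support x \<inter> word_support y = {}"
      using disj i by (auto simp: code_def)
    moreover have "card (code i) = n div w"
      unfolding code_def using i
      by (subst card_image[OF inj_on_subset[OF inj]]) (auto simp: card_cartesian_product)
    ultimately show ?thesis
      by (simp add: optimal_code_double_weight_iff[OF q w] is_code_double_weight_iff)
  qed
  moreover have "code i \<inter> code i' = {}" if "i < t" "i' < t" "i \<noteq> i'" for i i'
    using inj_on_image_Int[OF inj, of "{i} \<times> {..<n div w}" "{i'} \<times> {..<n div w}"] that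
    by (auto simp: code_def)
  moreover have "\<Union>(code ` {..<t}) = H q n w"
  proof -
    have "\<Union>(code ` {..<t}) = h ` ({..<t} \<times> {..<n div w})" by (auto simp: code_def)
    then show ?thesis using h by (simp add: bij_betw_def)
  qed
  ultimately show ?thesis unfolding is_TOC_def code_def[symmetric] by blast
qed

lemma TOC_exists_if_dvd:
  assumes q: "2 \<le> q" and w: "0 < w" "w \<le> n"
    and dvd: "(n div w) dvd ((q - 1) ^ w * (n choose w))"
  shows "\<exists>P. is_TOC q n (2 * w) w P"
proof -
  define m where "m = n div w"
  define t where "t = (q - 1) ^ w * (n choose w) div m"
  have fit: "w * m \<le> n" by (simp add: m_def)
  have total: "t * m = (q - 1) ^ w * (n choose w)" using dvd by (simp add: t_def m_def)
  obtain S where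
      S_blocks: "\<And>i s. i < t \<Longrightarrow> s < m \<Longrightarrow> S i s \<subseteq> {..<n} \<and> card (S i s) = w"
    and S_disjoint: "\<And>i s s'. i < t \<Longrightarrow> s < m \<Longrightarrow> s' < m \<Longrightarrow> s \<noteq> s' \<Longrightarrow> S i s \<inter> S i s' = {}"
    and S_count: "\<And>T. T \<subseteq> {..<n} \<Longrightarrow> card T = w \<Longrightarrow> slot_count t m S T = (q - 1) ^ w"
    using baranyai_decomposition[OF fit total] by blast
  have fibres:
    "card {p \<in> {..<t} \<times> {..<m}. case_prod S p = T} = card {x\<in>H q n w. word_support x = T}" for T
  proof (cases "T \<subseteq> {..<n} \<and> card T = w")
    case True
    have "{p \<in> {..<t} \<times> {..<m}. case_prod S p = T} = {(i, s). i < t \<and> s < m \<and> S i s = T}" by auto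
    then show ?thesis using True S_count card_H_fibre[of q n w T] q by (simp add: slot_count_def)
  next
    case False
    then have "{p \<in> {..<t} \<times> {..<m}. case_prod S p = T} = {}" using S_blocks by fastforce
    then show ?thesis using card_H_fibre[of q n w T] q unfolding if_not_P[OF False] by simp
  qed
  have "\<exists>h. bij_betw h ({..<t} \<times> {..<m}) (H q n w) \<and>
      (\<forall>p\<in>{..<t} \<times> {..<m}. word_support (h p) = case_prod S p)"
    by (rule bij_betw_matching_fibres) (simp_all add: finite_H fibres)
  then obtain h where h: "bij_betw h ({..<t} \<times> {..<m}) (H q n w)"
    and supports: "\<forall>p\<in>{..<t} \<times> {..<m}. word_support (h p) = case_prod S p"
    by blast
  have "is_TOC q n (2 * w) w ((\<lambda>i. h ` ({i} \<times> {..<n div w})) ` {..<t})"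
    by (rule is_TOC_of_class_bijection[OF q w]) (use h supports S_disjoint in \<open>auto simp: m_def\<close>)
  then show ?thesis by blast
qed

lemma dvd_if_TOC_exists:
  assumes q: "2 \<le> q" and w: "0 < w" "w \<le> n" and P: "is_TOC q n (2 * w) w P"
  shows "(n div w) dvd ((q - 1) ^ w * (n choose w))"
proof -
  have card_P: "card C = n div w" if "C \<in> P" for C
    using P that by (simp add: is_TOC_def optimal_code_double_weight_iff[OF q w])
  have union: "\<Union>P = H q n w" and disjoint: "pairwise disjnt P"
    using P by (auto simp: is_TOC_def pairwise_def disjnt_def)
  have "finite C" if "C \<in> P" for C
    using that union by (intro finite_subset[OF _ finite_H[of q n w]]) auto
  then have "card (H q n w) = (\<Sum>C\<in>P. card C)"
    unfolding union[symmetric] by (rule card_Union_disjoint[OF disjoint])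
  also have "\<dots> = card P * (n div w)" using card_P by simp
  finally show ?thesis using card_H[of q n w] q by (simp add: mult.commute)
qed

theorem theorem3p7:
  fixes q n w :: nat
  assumes "q \<ge> 2" and "0 < w" and "w \<le> n"
  shows "(\<exists>P. is_TOC q n (2 * w) w P) \<longleftrightarrow> (n div w) dvd ((q - 1) ^ w * (n choose w))"
  using dvd_if_TOC_exists[OF assms] TOC_exists_if_dvd[OF assms] by blast

end
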